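(* For any fixed $\varepsilon>0$, uniformly in the root $i\in V$, $$\mathbf P\big(W_\kappa\ge W_{\lfloor2/\varepsilon\rfloor}+\varepsilon\big)=o\Big(\frac1n\Big)\quad\text{as }n\to\infty.$$
   Context: Configuration model: for each $n$, $(d_i^-)_{1\le i\le n}$, $(d_i^+)_{1\le i\le n}$ positive integers with $\sum_id_i^-=\sum_id_i^+=m$; each vertex $i\in V=\{1,\dots,n\}$ carries a set $E_i^+$ of $d_i^+$ tails and a set $E_i^-$ of $d_i^-$ heads; $\omega$ is a uniformly random bijection from tails to heads, $\omega(e)=f$ an arc from the vertex of $e$ to that of $f$. Standing assumption: $\min_i\min(d_i^+,d_i^-)\ge2$ and $\Delta:=\max_i\max(d_i^+,d_i^-)$ bounded uniformly in $n$. Let $h=\lfloor\frac{\ln n}{10\ln\Delta}\rfloor$, $t=t(n)$ a positive integer, $w_{\min}=\frac{\ln n}n$. Exploration from a root $i$: initially $\mathcal T=\mathcal T^0=\{i\}$ and everything unmatched; $\partial_+\mathcal T$ ($\partial_-\mathcal T$) is the set of unmatched tails (heads) whose vertex lies in $\mathcal T$; for $e\in\partial_+\mathcal T$, $\mathbf h(e)$ is the number of vertices on the unique directed path in $\mathcal T$ from $i$ to the vertex of $e$ (inclusive), and $\mathbf w(e)$ the inverse product of their out-degrees. Iterate: select, among $e\in\partial_+\mathcal T$ with $\mathbf h(e)<t-h$ and $\mathbf w(e)>w_{\min}$, one of maximal weight (ties broken by a fixed deterministic order); match it to a uniformly chosen unmatched head $f$; if $f\notin\partial_-\mathcal T$,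 add arc $ef$ and the vertex of $f$ to $\mathcal T$. Stop when no such tail exists; $\kappa$ is the number of pairings, $e_kf_k$ the $k$-th arc formed, $\mathcal T^k$ the tree after $k$ pairings. Define $W_0=0$ and $W_{k+1}=W_k+\mathbf 1_{k<\kappa}\mathbf 1_{f_{k+1}\in\partial_-\mathcal T^k}\mathbf w(e_{k+1})$. *)

theory Defs
  imports "HOL-Probability.Probability"
begin

text \<open>Configuration model.  A tail of vertex i is a pair
(i,a) with a < dout i, a head of vertex j is a pair (j,b) with b < din j; the
vertex of a half-edge is its first component.\<close>

type_synonym halfedge = "nat \<times> nat"

definition tails :: "(nat \<Rightarrow> nat) \<Rightarrow> nat \<Rightarrow> halfedge set" where
  "tails dout n = {(i, a). i \<in> {1..n} \<and> a < dout i}"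

definition heads :: "(nat \<Rightarrow> nat) \<Rightarrow> nat \<Rightarrow> halfedge set" where
  "heads din n = {(j, b). j \<in> {1..n} \<and> b < din j}"

text \<open>Sample space: bijections from tails to heads (extensional), uniformly.\<close>
definition Omega :: "(nat \<Rightarrow> nat) \<Rightarrow> (nat \<Rightarrow> nat) \<Rightarrow> nat \<Rightarrow> (halfedge \<Rightarrow> halfedge) set" where
  "Omega din dout n =
     {\<omega> \<in> tails dout n \<rightarrow>\<^sub>E heads din n. bij_betw \<omega> (tails dout n) (heads din n)}"

definition Delta :: "(nat \<Rightarrow> nat) \<Rightarrow> (nat \<Rightarrow> nat) \<Rightarrow> nat \<Rightarrow> nat" where
  "Delta din dout n = Max (din ` {1..n} \<union> dout ` {1..n})"

definition hpar :: "(nat \<Rightarrow> nat) \<Rightarrow> (nat \<Rightarrow> nat) \<Rightarrow> nat \<Rightarrow> int" where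
  "hpar din dout n = \<lfloor>ln (real n) / (10 * ln (real (Delta din dout n)))\<rfloor>"

definition wmin :: "nat \<Rightarrow> real" where
  "wmin n = ln (real n) / real n"

text \<open>Exploration state: the list of pairings performed so far (tail, head),
the vertex set of the tree, and for each tree vertex v the number of vertices
(hgt v) on the tree path from the root to v and the inverse product (wgt v) of
the out-degrees of these vertices.  For a tail e in the tree boundary,
h(e) = hgt (fst e) and w(e) = wgt (fst e).\<close>
record expl =
  pairs :: "(halfedge \<times> halfedge) list"
  tree :: "nat set"
  hgt :: "nat \<Rightarrow> nat"
  wgt :: "nat \<Rightarrow> real"

definition init :: "(nat \<Rightarrow> nat) \<Rightarrow> nat \<Rightarrow> expl" where
  "init dout i = \<lparr>pairs = [], tree = {i}, hgt = (\<lambda>_. 1), wgt = (\<lambda>_. 1 / real (dout i))\<rparr>"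

definition bdry_out :: "(nat \<Rightarrow> nat) \<Rightarrow> nat \<Rightarrow> expl \<Rightarrow> halfedge set" where
  "bdry_out dout n s = {e \<in> tails dout n. fst e \<in> tree s \<and> e \<notin> fst ` set (pairs s)}"

definition bdry_in :: "(nat \<Rightarrow> nat) \<Rightarrow> nat \<Rightarrow> expl \<Rightarrow> halfedge set" where
  "bdry_in din n s = {f \<in> heads din n. fst f \<in> tree s \<and> f \<notin> snd ` set (pairs s)}"

definition cands ::
  "(nat \<Rightarrow> nat) \<Rightarrow> (nat \<Rightarrow> nat) \<Rightarrow> nat \<Rightarrow> nat \<Rightarrow> expl \<Rightarrow> halfedge set" where
  "cands din dout n t s =
     {e \<in> bdry_out dout n s. int (hgt s (fst e)) < int t - hpar din dout n
                             \<and> wgt s (fst e) > wmin n}"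

definition sel ::
  "(nat \<Rightarrow> nat) \<Rightarrow> (nat \<Rightarrow> nat) \<Rightarrow> nat \<Rightarrow> nat \<Rightarrow> (halfedge \<Rightarrow> nat) \<Rightarrow> expl \<Rightarrow> halfedge" where
  "sel din dout n t rk s =
     (ARG_MIN rk e. e \<in> cands din dout n t s \<and>
        (\<forall>e' \<in> cands din dout n t s. wgt s (fst e') \<le> wgt s (fst e)))"

text \<open>One step of the exploration; the head matched to e is omega e, i.e. the
uniformly chosen unmatched head is revealed from the uniform bijection.\<close>
definition step ::
  "(nat \<Rightarrow> nat) \<Rightarrow> (nat \<Rightarrow> nat) \<Rightarrow> nat \<Rightarrow> nat \<Rightarrow> (halfedge \<Rightarrow> nat)
     \<Rightarrow> (halfedge \<Rightarrow> halfedge) \<Rightarrow> expl \<Rightarrow> expl" where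
  "step din dout n t rk \<omega> s =
     (if cands din dout n t s = {} then s
      else (let e = sel din dout n t rk s; f = \<omega> e in
        if f \<notin> bdry_in din n s then
          \<lparr>pairs = pairs s @ [(e, f)], tree = insert (fst f) (tree s),
           hgt = (hgt s)(fst f := hgt s (fst e) + 1),
           wgt = (wgt s)(fst f := wgt s (fst e) / real (dout (fst f)))\<rparr>
        else s\<lparr>pairs := pairs s @ [(e, f)]\<rparr>))"

definition state ::
  "(nat \<Rightarrow> nat) \<Rightarrow> (nat \<Rightarrow> nat) \<Rightarrow> nat \<Rightarrow> nat \<Rightarrow> (halfedge \<Rightarrow> nat) \<Rightarrow> nat
     \<Rightarrow> (halfedge \<Rightarrow> halfedge) \<Rightarrow> nat \<Rightarrow> expl" where
  "state din dout n t rk i \<omega> k = (step din dout n t rk \<omega> ^^ k) (init dout i)"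

definition kappa ::
  "(nat \<Rightarrow> nat) \<Rightarrow> (nat \<Rightarrow> nat) \<Rightarrow> nat \<Rightarrow> nat \<Rightarrow> (halfedge \<Rightarrow> nat) \<Rightarrow> nat
     \<Rightarrow> (halfedge \<Rightarrow> halfedge) \<Rightarrow> nat" where
  "kappa din dout n t rk i \<omega> = (LEAST k. cands din dout n t (state din dout n t rk i \<omega> k) = {})"

fun Wp ::
  "(nat \<Rightarrow> nat) \<Rightarrow> (nat \<Rightarrow> nat) \<Rightarrow> nat \<Rightarrow> nat \<Rightarrow> (halfedge \<Rightarrow> nat) \<Rightarrow> nat
     \<Rightarrow> (halfedge \<Rightarrow> halfedge) \<Rightarrow> nat \<Rightarrow> real" where
  "Wp din dout n t rk i \<omega> 0 = 0"
| "Wp din dout n t rk i \<omega> (Suc k) =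
     Wp din dout n t rk i \<omega> k +
     (let s = state din dout n t rk i \<omega> k; e = sel din dout n t rk s in
      if k < kappa din dout n t rk i \<omega> \<and> \<omega> e \<in> bdry_in din n s
      then wgt s (fst e) else 0)"

end

theory Submission
  imports Defs "HOL-Real_Asymp.Real_Asymp"
begin

text \<open>The exploration is greedy: tails are paired in order of non-increasing weight. A potential
  argument shows that the tail paired in step k weighs at most 2/(k+1); as paired tails weigh more
  than ln n / n, the exploration stops within N \<approx> 2n / ln n steps, and W(\<kappa>) - W(K) is at most
  the sum of 2/(j+1) over the collision steps j \<ge> K. Given the past, the head paired in step j is
  uniform among the at least n unmatched heads, at most D(j+1) of which lie in the tree, so a
  collision has conditional probability at most D(j+1)/n. Since 2/(K+1) < \<epsilon>, on the event either
  two collisions occur in the steps K..L-1, L \<approx> ln n, or the collisions after L carry weight at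
  least \<epsilon> - 2/(K+1). Either way a weighted exponential moment of the collision indicators exceeds
  n^(3/2), while its mean is bounded; Markov's inequality gives the probability O(n^(-3/2)).\<close>

subsection \<open>Real-valued estimates\<close>

lemma exp_half_le_one_plus:
  fixes y :: real
  assumes "0 \<le> y" "y \<le> 1"
  shows "exp (y / 2) \<le> 1 + y"
proof -
  have "exp (y / 2) \<le> 1 + y / 2 + (y / 2)\<^sup>2"
    using exp_bound[of "y / 2"] assms by simp
  also have "\<dots> \<le> 1 + y"
    using assms mult_left_le_one_le[of y y] by (simp add: power2_eq_square field_simps)
  finally show ?thesis .
qed

lemma potential_charge_split:
  fixes w x d :: real
  assumes w: "0 < w" and x: "0 \<le> x" and d: "2 \<le> d"
  shows "(if w \<le> x then 1 else 0) + d * (if w \<le> x / d then 2 * (x / d) / w - 1 else 0)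
         \<le> (if w \<le> x then 2 * x / w - 1 else 0)"
proof -
  have "x / d \<le> x"
    using x d by (simp add: divide_le_eq mult_le_cancel_left1)
  moreover have "w \<le> x \<Longrightarrow> 1 \<le> 2 * x / w - 1"
    using w by (simp add: field_simps)
  moreover have "d * (2 * (x / d) / w - 1) = 2 * x / w - d"
    using w d by (simp add: field_simps)
  ultimately show ?thesis
    using d by auto
qed

lemma sum_indicator_weighted_le:
  fixes S :: "'a \<Rightarrow> real"
  assumes "finite H" "B \<subseteq> H" "\<And>f. f \<in> H \<Longrightarrow> S f \<le> M" "0 \<le> M" "0 \<le> x"
    and B: "real (card B) \<le> real (card H) * q"
  shows "(\<Sum>f\<in>H. (1 + (if f \<in> B then x else 0)) * S f) \<le> real (card H) * ((1 + x * q) * M)"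
proof -
  have "(\<Sum>f\<in>H. (1 + (if f \<in> B then x else 0)) * S f) \<le> (\<Sum>f\<in>H. (1 + (if f \<in> B then x else 0)) * M)"
    using assms by (intro sum_mono mult_left_mono) auto
  also have "\<dots> = (real (card H) + x * real (card B)) * M"
    using assms(1,2) by (simp add: sum_distrib_right[symmetric] sum.distrib sum.If_cases Int_absorb1)
  also have "\<dots> \<le> (real (card H) * (1 + x * q)) * M"
    using mult_left_mono[OF B \<open>0 \<le> x\<close>] \<open>0 \<le> M\<close> by (intro mult_right_mono) (auto simp: algebra_simps)
  finally show ?thesis by (simp only: mult.assoc)
qed

text \<open>On the steps K..L-1 the large weight X makes two collisions expensive; beyond L the weight
  of step k is proportional to the bound 2/(k+1) on the weight of the tail paired there.\<close>

definition moment_weight :: "nat \<Rightarrow> nat \<Rightarrow> real \<Rightarrow> real \<Rightarrow> nat \<Rightarrow> real" where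
  "moment_weight K L X \<mu> k = (if k < K then 0 else if k < L then X else \<mu> * (2 / real (k + 1)))"

lemma moment_weight_nonneg: "0 \<le> X \<Longrightarrow> 0 \<le> \<mu> \<Longrightarrow> 0 \<le> moment_weight K L X \<mu> k"
  by (simp add: moment_weight_def)

lemma prod_subset_le_prod_indicator:
  fixes x :: "nat \<Rightarrow> real"
  assumes "A \<subseteq> C \<inter> {..<N}" "\<And>k. 0 \<le> x k"
  shows "(\<Prod>k\<in>A. 1 + x k) \<le> (\<Prod>k<N. 1 + (if k \<in> C then x k else 0))"
proof -
  have "(\<Prod>k\<in>A. 1 + x k) = (\<Prod>k\<in>A. 1 + (if k \<in> C then x k else 0))"
    using assms(1) by (intro prod.cong) auto
  also have "\<dots> \<le> (\<Prod>k<N. 1 + (if k \<in> C then x k else 0))"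
    using assms by (intro prod_mono2) (auto intro: add_nonneg_nonneg)
  finally show ?thesis .
qed

lemma prod_moment_weight_ge_square:
  assumes "{j1, j2} \<subseteq> C \<inter> {K..<L} \<inter> {..<N}" "j1 \<noteq> j2" "0 \<le> X" "0 \<le> \<mu>"
  shows "X\<^sup>2 \<le> (\<Prod>k<N. 1 + (if k \<in> C then moment_weight K L X \<mu> k else 0))"
proof -
  have "X\<^sup>2 \<le> (1 + X) * (1 + X)"
    using assms by (simp add: power2_eq_square algebra_simps)
  also have "\<dots> = (\<Prod>k\<in>{j1, j2}. 1 + moment_weight K L X \<mu> k)"
    using assms by (simp add: moment_weight_def)
  also have "\<dots> \<le> (\<Prod>k<N. 1 + (if k \<in> C then moment_weight K L X \<mu> k else 0))"
    using assms by (intro prod_subset_le_prod_indicator moment_weight_nonneg) auto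
  finally show ?thesis .
qed

lemma prod_moment_weight_ge_exp:
  assumes mass: "\<eta> \<le> (\<Sum>j\<in>C \<inter> {K..<N} - {..<L}. 2 / real (j + 1))"
    and "0 \<le> X" "0 \<le> \<mu>" and late: "\<And>k. L \<le> k \<Longrightarrow> \<mu> * (2 / real (k + 1)) \<le> 1"
  shows "exp (\<mu> * \<eta> / 2) \<le> (\<Prod>k<N. 1 + (if k \<in> C then moment_weight K L X \<mu> k else 0))"
proof -
  define B where "B = C \<inter> {K..<N} - {..<L}"
  have "exp (\<mu> * \<eta> / 2) \<le> exp (\<mu> * (\<Sum>j\<in>B. 2 / real (j + 1)) / 2)"
    using mass \<open>0 \<le> \<mu>\<close> by (simp add: B_def mult_left_mono divide_right_mono)
  also have "\<dots> = (\<Prod>j\<in>B. exp (\<mu> * (2 / real (j + 1)) / 2))"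
    by (simp add: exp_sum[symmetric] sum_distrib_left sum_divide_distrib B_def)
  also have "\<dots> \<le> (\<Prod>j\<in>B. 1 + moment_weight K L X \<mu> j)"
  proof (intro prod_mono conjI)
    fix j assume "j \<in> B"
    then have "moment_weight K L X \<mu> j = \<mu> * (2 / real (j + 1))" "L \<le> j"
      by (auto simp: B_def moment_weight_def)
    then show "exp (\<mu> * (2 / real (j + 1)) / 2) \<le> 1 + moment_weight K L X \<mu> j"
      using exp_half_le_one_plus[of "\<mu> * (2 / real (j + 1))"] late[OF \<open>L \<le> j\<close>] \<open>0 \<le> \<mu>\<close>
      by simp
  qed simp
  also have "\<dots> \<le> (\<Prod>k<N. 1 + (if k \<in> C then moment_weight K L X \<mu> k else 0))"
    using assms by (intro prod_subset_le_prod_indicator moment_weight_nonneg) (auto simp: B_def)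
  finally show ?thesis .
qed

text \<open>The dichotomy behind the tail bound: the collisions before step L carry weight at most
  2/(K+1) unless there are two of them.\<close>

lemma prod_moment_weight_ge:
  assumes mass: "\<epsilon> \<le> (\<Sum>j\<in>C \<inter> {K..<N}. 2 / real (j + 1))"
    and X: "0 \<le> X" and \<mu>: "0 \<le> \<mu>" and late: "\<And>k. L \<le> k \<Longrightarrow> \<mu> * (2 / real (k + 1)) \<le> 1"
    and T: "T \<le> X\<^sup>2" "T \<le> exp (\<mu> * (\<epsilon> - 2 / real (K + 1)) / 2)"
  shows "T \<le> (\<Prod>k<N. 1 + (if k \<in> C then moment_weight K L X \<mu> k else 0))"
proof -
  define A where "A = C \<inter> {K..<N} \<inter> {..<L}"
  consider j1 j2 where "j1 \<in> A" "j2 \<in> A" "j1 \<noteq> j2" | "\<forall>j1\<in>A. \<forall>j2\<in>A. j1 = j2"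
    by blast
  then show ?thesis
  proof cases
    case 1
    then have "{j1, j2} \<subseteq> C \<inter> {K..<L} \<inter> {..<N}"
      by (auto simp: A_def)
    then have "X\<^sup>2 \<le> (\<Prod>k<N. 1 + (if k \<in> C then moment_weight K L X \<mu> k else 0))"
      using \<open>j1 \<noteq> j2\<close> X \<mu> by (rule prod_moment_weight_ge_square)
    with T(1) show ?thesis
      by linarith
  next
    case 2
    have "(\<Sum>j\<in>A. 2 / real (j + 1)) \<le> 2 / real (K + 1)"
    proof (cases "A = {}")
      case False
      then obtain j where "j \<in> A"
        by blast
      with 2 have "A = {j}" "K \<le> j"
        by (auto simp: A_def)
      then show ?thesis
        by (simp add: frac_le)
    qed simp
    moreover have "(\<Sum>j\<in>C \<inter> {K..<N}. 2 / real (j + 1))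
        = (\<Sum>j\<in>A. 2 / real (j + 1)) + (\<Sum>j\<in>C \<inter> {K..<N} - {..<L}. 2 / real (j + 1))"
      unfolding A_def by (rule sum.Int_Diff) simp
    ultimately have "\<epsilon> - 2 / real (K + 1) \<le> (\<Sum>j\<in>C \<inter> {K..<N} - {..<L}. 2 / real (j + 1))"
      using mass by linarith
    then have "exp (\<mu> * (\<epsilon> - 2 / real (K + 1)) / 2)
        \<le> (\<Prod>k<N. 1 + (if k \<in> C then moment_weight K L X \<mu> k else 0))"
      using X \<mu> late by (rule prod_moment_weight_ge_exp)
    with T(2) show ?thesis
      by linarith
  qed
qed

lemma sum_moment_weight_le:
  fixes D m :: real
  assumes X: "0 \<le> X" and \<mu>: "0 \<le> \<mu>" and D: "0 \<le> D" and m: "0 < m"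
  shows "(\<Sum>k<N. moment_weight K L X \<mu> k * (D * real (k + 1) / m))
      \<le> X * D * (real L)\<^sup>2 / m + 2 * \<mu> * D * real N / m"
proof -
  have term_le: "moment_weight K L X \<mu> k * (D * real (k + 1) / m)
      \<le> (if k < L then X * D * real L / m else 0) + 2 * \<mu> * D / m" for k
  proof -
    have late: "\<mu> * (2 / r) * (D * r / m) = 2 * \<mu> * D / m" if "0 < r" for r
      using that m by (simp add: field_simps)
    have "X * D * real (k + 1) / m \<le> X * D * real L / m" if "k < L"
      using that X D m by (intro divide_right_mono mult_left_mono) auto
    moreover have "0 \<le> 2 * \<mu> * D / m" "0 \<le> X * D * real L / m"
      using X \<mu> D m by simp_all
    ultimately show ?thesis
      using late[of "real (k + 1)"] by (auto simp: moment_weight_def mult_ac)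
  qed
  have "(\<Sum>k<N. moment_weight K L X \<mu> k * (D * real (k + 1) / m))
      \<le> (\<Sum>k<N. (if k < L then X * D * real L / m else 0)) + real N * (2 * \<mu> * D / m)"
    using sum_mono[of "{..<N}", OF term_le] by (simp add: sum.distrib)
  also have "(\<Sum>k<N. (if k < L then X * D * real L / m else 0)) = (\<Sum>k\<in>{k\<in>{..<N}. k < L}. X * D * real L / m)"
    by (rule sum.inter_filter[symmetric]) simp
  also have "\<dots> \<le> (\<Sum>k<L. X * D * real L / m)"
    using X D m by (intro sum_mono2) auto
  also have "(\<Sum>k<L. X * D * real L / m) = X * D * (real L)\<^sup>2 / m"
    by (simp add: power2_eq_square)
  finally show ?thesis
    by (simp add: field_simps)
qed

lemma moment_exponent_le:
  fixes m D \<eta> :: real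
  assumes m: "0 < m" "0 < ln m" and \<eta>: "0 < \<eta>" and D: "0 \<le> D"
    and L: "real L \<le> 6 * ln m / \<eta> + 1" and N: "real N \<le> 2 * m / ln m + 1"
    and large: "m powr (3/4) * D * (6 * ln m / \<eta> + 1)\<^sup>2 / m \<le> 1" "6 * D * ln m / (\<eta> * m) \<le> 1"
  shows "m powr (3/4) * D * (real L)\<^sup>2 / m + 2 * (3 * ln m / \<eta>) * D * real N / m \<le> 12 * D / \<eta> + 2"
proof -
  have "(real L)\<^sup>2 \<le> (6 * ln m / \<eta> + 1)\<^sup>2"
    using L by (intro power_mono) auto
  then have "m powr (3/4) * D * (real L)\<^sup>2 / m \<le> m powr (3/4) * D * (6 * ln m / \<eta> + 1)\<^sup>2 / m"
    using m D by (intro divide_right_mono mult_left_mono) auto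
  moreover have "2 * (3 * ln m / \<eta>) * D * real N / m \<le> 2 * (3 * ln m / \<eta>) * D * (2 * m / ln m + 1) / m"
    using N m \<eta> D by (intro divide_right_mono mult_left_mono) auto
  moreover have "2 * (3 * ln m / \<eta>) * D * (2 * m / ln m + 1) / m = 12 * D / \<eta> + 6 * D * ln m / (\<eta> * m)"
    using m \<eta> by (simp add: field_simps)
  ultimately show ?thesis
    using large by linarith
qed

lemma divide_powr_three_halves_le:
  fixes C \<delta> m :: real
  assumes m: "0 < m" and \<delta>: "0 < \<delta>" and C: "C / \<delta> \<le> sqrt m"
  shows "C / m powr (3/2) \<le> \<delta> / m"
proof -
  have "m powr (3/2) = m powr 1 * m powr (1/2)"
    by (subst powr_add[symmetric]) simp
  then have "C / m powr (3/2) = C / sqrt m / m"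
    using m by (simp add: powr_half_sqrt mult.commute)
  also have "\<dots> \<le> \<delta> / m"
    using m \<delta> C by (intro divide_right_mono) (auto simp: divide_le_eq mult.commute)
  finally show ?thesis .
qed

subsection \<open>The exploration process\<close>

locale config_exploration =
  fixes din dout :: "nat \<Rightarrow> nat" and n t :: nat and rk :: "halfedge \<Rightarrow> nat" and i D :: nat
  assumes degree_sums_eq: "(\<Sum>j\<in>{1..n}. din j) = (\<Sum>j\<in>{1..n}. dout j)"
    and degrees_ge_2: "\<forall>j\<in>{1..n}. 2 \<le> din j \<and> 2 \<le> dout j"
    and degrees_le: "\<forall>j\<in>{1..n}. din j \<le> D \<and> dout j \<le> D"
    and root_in_V: "i \<in> {1..n}"
begin

abbreviation "Tails \<equiv> tails dout n"
abbreviation "Heads \<equiv> heads din n"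
abbreviation "Conf \<equiv> Omega din dout n"
abbreviation "adm \<equiv> cands din dout n t"
abbreviation "selected \<equiv> sel din dout n t rk"
abbreviation "advance \<equiv> step din dout n t rk"
abbreviation "St \<equiv> state din dout n t rk i"
abbreviation "\<kappa> \<equiv> kappa din dout n t rk i"
abbreviation "W \<equiv> Wp din dout n t rk i"
abbreviation "open_heads \<equiv> bdry_in din n"
abbreviation "unmatched_heads s \<equiv> Heads - snd ` set (pairs s)"

lemma Tails_eq: "Tails = Sigma {1..n} (\<lambda>j. {..<dout j})"
  by (auto simp: tails_def)

lemma Heads_eq: "Heads = Sigma {1..n} (\<lambda>j. {..<din j})"
  by (auto simp: heads_def)

lemma finite_Tails [simp]: "finite Tails"
  by (simp add: Tails_eq)

lemma finite_Heads [simp]: "finite Heads"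
  by (simp add: Heads_eq)

lemma card_Heads_ge: "2 * n \<le> card Heads"
proof -
  have "(\<Sum>j\<in>{1..n}. 2) \<le> (\<Sum>j\<in>{1..n}. din j)"
    using degrees_ge_2 by (intro sum_mono) auto
  then show ?thesis
    by (simp add: Heads_eq)
qed

lemma Conf_D: "\<omega> \<in> Conf \<Longrightarrow> \<omega> \<in> Tails \<rightarrow>\<^sub>E Heads \<and> bij_betw \<omega> Tails Heads"
  by (auto simp: Omega_def)

lemma Conf_nonempty: "Conf \<noteq> {}"
proof -
  have "card Tails = card Heads"
    using degree_sums_eq by (simp add: Tails_eq Heads_eq)
  then obtain h where "bij_betw h Tails Heads"
    using finite_same_card_bij[of Tails Heads] by auto
  then have "restrict h Tails \<in> Conf"
    unfolding Omega_def by (auto simp: bij_betw_def inj_on_def)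
  then show ?thesis
    by auto
qed

lemma finite_Conf [simp]: "finite Conf"
proof (rule finite_subset)
  show "Conf \<subseteq> Tails \<rightarrow>\<^sub>E Heads"
    by (auto simp: Omega_def)
qed (simp add: finite_PiE)

lemma wmin_nonneg: "0 \<le> wmin n"
  using root_in_V by (auto simp: wmin_def intro!: divide_nonneg_nonneg ln_ge_zero)

lemma finite_adm [simp]: "finite (adm s)"
  by (rule finite_subset[of _ Tails]) (auto simp: cands_def bdry_out_def)

lemma selected_adm_max:
  assumes "adm s \<noteq> {}"
  shows "selected s \<in> adm s" "\<And>e. e \<in> adm s \<Longrightarrow> wgt s (fst e) \<le> wgt s (fst (selected s))"
proof -
  have "Max ((\<lambda>e. wgt s (fst e)) ` adm s) \<in> (\<lambda>e. wgt s (fst e)) ` adm s"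
    using assms by (intro Max_in) auto
  then obtain e0 where e0: "e0 \<in> adm s" "wgt s (fst e0) = Max ((\<lambda>e. wgt s (fst e)) ` adm s)"
    by auto
  then have "e0 \<in> adm s \<and> (\<forall>e'\<in>adm s. wgt s (fst e') \<le> wgt s (fst e0))"
    by auto
  from arg_min_nat_lemma[of "\<lambda>e. e \<in> adm s \<and> (\<forall>e'\<in>adm s. wgt s (fst e') \<le> wgt s (fst e))", OF this]
  show "selected s \<in> adm s" "\<And>e. e \<in> adm s \<Longrightarrow> wgt s (fst e) \<le> wgt s (fst (selected s))"
    unfolding sel_def by blast+
qed

lemma selected_tail_props:
  assumes "adm s \<noteq> {}"
  shows "selected s \<in> Tails" "fst (selected s) \<in> tree s" "selected s \<notin> fst ` set (pairs s)"
    "wmin n < wgt s (fst (selected s))"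
  using selected_adm_max(1)[OF assms] by (auto simp: cands_def bdry_out_def)

lemma advance_idle: "adm s = {} \<Longrightarrow> advance \<omega> s = s"
  by (simp add: step_def)

lemma advance_new_vertex:
  "adm s \<noteq> {} \<Longrightarrow> \<omega> (selected s) \<notin> open_heads s \<Longrightarrow> advance \<omega> s =
   \<lparr>pairs = pairs s @ [(selected s, \<omega> (selected s))],
    tree = insert (fst (\<omega> (selected s))) (tree s),
    hgt = (hgt s)(fst (\<omega> (selected s)) := hgt s (fst (selected s)) + 1),
    wgt = (wgt s)(fst (\<omega> (selected s)) :=
            wgt s (fst (selected s)) / real (dout (fst (\<omega> (selected s)))))\<rparr>"
  by (simp add: step_def Let_def)

lemma advance_collision:
  "adm s \<noteq> {} \<Longrightarrow> \<omega> (selected s) \<in> open_heads s \<Longrightarrow>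
   advance \<omega> s = s\<lparr>pairs := pairs s @ [(selected s, \<omega> (selected s))]\<rparr>"
  by (simp add: step_def Let_def)

lemma pairs_advance: "adm s \<noteq> {} \<Longrightarrow> pairs (advance \<omega> s) = pairs s @ [(selected s, \<omega> (selected s))]"
  by (cases "\<omega> (selected s) \<in> open_heads s") (auto simp: advance_collision advance_new_vertex)

lemma St_0: "St \<omega> 0 = init dout i"
  by (simp add: state_def)

lemma St_Suc: "St \<omega> (Suc k) = advance \<omega> (St \<omega> k)"
  by (simp add: state_def)

text \<open>The last conjunct says that the exploration is greedy.\<close>

definition explore_inv :: "(halfedge \<Rightarrow> halfedge) \<Rightarrow> expl \<Rightarrow> bool" where
  "explore_inv \<omega> s \<longleftrightarrow> tree s \<subseteq> {1..n} \<and>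
     (\<forall>p\<in>set (pairs s). fst p \<in> Tails \<and> fst (fst p) \<in> tree s \<and> snd p = \<omega> (fst p)) \<and>
     distinct (map fst (pairs s)) \<and> card (tree s) \<le> length (pairs s) + 1 \<and>
     (\<forall>e\<in>fst ` set (pairs s). \<forall>e'\<in>adm s. wgt s (fst e') \<le> wgt s (fst e))"

lemma explore_inv_init: "explore_inv \<omega> (init dout i)"
  using root_in_V by (auto simp: explore_inv_def init_def)

lemma selected_head_unmatched:
  assumes "\<omega> \<in> Conf" "explore_inv \<omega> s" "adm s \<noteq> {}"
  shows "\<omega> (selected s) \<in> unmatched_heads s"
proof -
  have bij: "bij_betw \<omega> Tails Heads" and "\<omega> \<in> Tails \<rightarrow>\<^sub>E Heads"
    using Conf_D[OF assms(1)] by auto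
  then have "\<omega> (selected s) \<in> Heads"
    using selected_tail_props(1)[OF assms(3)] by auto
  moreover have "\<omega> (selected s) \<noteq> snd p" if "p \<in> set (pairs s)" for p
  proof
    assume eq: "\<omega> (selected s) = snd p"
    have "fst p \<in> Tails" "snd p = \<omega> (fst p)"
      using assms(2) that by (auto simp: explore_inv_def)
    with eq bij selected_tail_props(1)[OF assms(3)] have "fst p = selected s"
      by (auto simp: bij_betw_def inj_on_def)
    with that selected_tail_props(3)[OF assms(3)] show False
      by force
  qed
  ultimately show ?thesis
    by auto
qed

lemma new_vertex_fresh:
  assumes "\<omega> \<in> Conf" "explore_inv \<omega> s" "adm s \<noteq> {}" "\<omega> (selected s) \<notin> open_heads s"
  shows "fst (\<omega> (selected s)) \<notin> tree s" "fst (\<omega> (selected s)) \<in> {1..n}"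
  using selected_head_unmatched[OF assms(1-3)] assms(4) by (auto simp: bdry_in_def heads_def)

lemma explore_inv_greedy:
  "explore_inv \<omega> s \<Longrightarrow> e1 \<in> fst ` set (pairs s) \<Longrightarrow> e' \<in> adm s \<Longrightarrow> wgt s (fst e') \<le> wgt s (fst e1)"
  unfolding explore_inv_def by blast

lemma explore_inv_collision:
  assumes I: "explore_inv \<omega> s" and ne: "adm s \<noteq> {}" and coll: "\<omega> (selected s) \<in> open_heads s"
  shows "explore_inv \<omega> (advance \<omega> s)"
proof -
  define e where "e = selected s"
  have S: "advance \<omega> s = s\<lparr>pairs := pairs s @ [(e, \<omega> e)]\<rparr>"
    using advance_collision[where \<omega>=\<omega>, OF ne coll] by (simp add: e_def)
  have "wgt s (fst e') \<le> wgt s (fst e1)"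
    if "e1 \<in> insert e (fst ` set (pairs s))" "e' \<in> adm (advance \<omega> s)" for e1 e'
  proof -
    have "e' \<in> adm s"
      using that(2) unfolding S by (auto simp: cands_def bdry_out_def)
    then show ?thesis
      using that(1) explore_inv_greedy[OF I] selected_adm_max(2)[OF ne] unfolding e_def by blast
  qed
  then have "\<forall>e1\<in>fst ` set (pairs (advance \<omega> s)). \<forall>e'\<in>adm (advance \<omega> s).
      wgt (advance \<omega> s) (fst e') \<le> wgt (advance \<omega> s) (fst e1)"
    by (simp add: S)
  moreover have "tree (advance \<omega> s) \<subseteq> {1..n} \<and>
     (\<forall>p\<in>set (pairs (advance \<omega> s)). fst p \<in> Tails \<and> fst (fst p) \<in> tree (advance \<omega> s) \<and> snd p = \<omega> (fst p)) \<and>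
     distinct (map fst (pairs (advance \<omega> s))) \<and> card (tree (advance \<omega> s)) \<le> length (pairs (advance \<omega> s)) + 1"
    using I selected_tail_props[OF ne] unfolding explore_inv_def S by (auto simp: e_def)
  ultimately show ?thesis
    unfolding explore_inv_def by blast
qed

lemma explore_inv_new_vertex:
  assumes \<omega>: "\<omega> \<in> Conf" and I: "explore_inv \<omega> s" and ne: "adm s \<noteq> {}"
    and new: "\<omega> (selected s) \<notin> open_heads s"
  shows "explore_inv \<omega> (advance \<omega> s)"
proof -
  define e where "e = selected s"
  define v where "v = fst (\<omega> e)"
  define x where "x = wgt s (fst e)"
  have v: "v \<notin> tree s" "v \<in> {1..n}"
    using new_vertex_fresh[OF \<omega> I ne new] by (auto simp: v_def e_def)
  have S: "advance \<omega> s = \<lparr>pairs = pairs s @ [(e, \<omega> e)], tree = insert v (tree s),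
      hgt = (hgt s)(v := hgt s (fst e) + 1), wgt = (wgt s)(v := x / real (dout v))\<rparr>"
    using advance_new_vertex[where \<omega>=\<omega>, OF ne new] by (simp add: e_def v_def x_def)
  have e: "e \<in> Tails" "fst e \<in> tree s" "wmin n < x"
    using selected_tail_props[OF ne] by (auto simp: e_def x_def)
  have paired_in_tree: "fst e1 \<in> tree s" if "e1 \<in> insert e (fst ` set (pairs s))" for e1
    using that e(2) I by (auto simp: explore_inv_def)
  have "x / real (dout v) \<le> x"
    using e(3) wmin_nonneg degrees_ge_2 v(2) by (simp add: divide_le_eq mult_le_cancel_left1)
  then have new_adm: "wgt (advance \<omega> s) (fst e') \<le> x" if "e' \<in> adm (advance \<omega> s)" for e'
    using that selected_adm_max(2)[OF ne] unfolding S
    by (cases "fst e' = v") (auto simp: cands_def bdry_out_def e_def x_def)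
  have "wgt (advance \<omega> s) (fst e') \<le> wgt (advance \<omega> s) (fst e1)"
    if "e1 \<in> insert e (fst ` set (pairs s))" "e' \<in> adm (advance \<omega> s)" for e1 e'
  proof -
    have "x \<le> wgt s (fst e1)"
      using that(1) explore_inv_greedy[OF I] selected_adm_max(1)[OF ne] unfolding e_def x_def by blast
    moreover have "wgt (advance \<omega> s) (fst e1) = wgt s (fst e1)"
      using paired_in_tree[OF that(1)] v(1) unfolding S by auto
    ultimately show ?thesis
      using new_adm[OF that(2)] by linarith
  qed
  then have "\<forall>e1\<in>fst ` set (pairs (advance \<omega> s)). \<forall>e'\<in>adm (advance \<omega> s).
      wgt (advance \<omega> s) (fst e') \<le> wgt (advance \<omega> s) (fst e1)"
    by (simp add: pairs_advance[OF ne] e_def)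
  moreover have "finite (tree s)"
    using I by (auto simp: explore_inv_def intro: finite_subset)
  then have "tree (advance \<omega> s) \<subseteq> {1..n} \<and>
     (\<forall>p\<in>set (pairs (advance \<omega> s)). fst p \<in> Tails \<and> fst (fst p) \<in> tree (advance \<omega> s) \<and> snd p = \<omega> (fst p)) \<and>
     distinct (map fst (pairs (advance \<omega> s))) \<and> card (tree (advance \<omega> s)) \<le> length (pairs (advance \<omega> s)) + 1"
    using I e v(2) selected_tail_props(3)[OF ne] unfolding explore_inv_def S by (auto simp: card_insert_if e_def)
  ultimately show ?thesis
    unfolding explore_inv_def by blast
qed

lemma explore_inv_St: "\<omega> \<in> Conf \<Longrightarrow> explore_inv \<omega> (St \<omega> k)"
proof (induction k)
  case (Suc k)
  then show ?case
    using explore_inv_collision explore_inv_new_vertex advance_idle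
    by (cases "adm (St \<omega> k) = {}"; cases "\<omega> (selected (St \<omega> k)) \<in> open_heads (St \<omega> k)")
       (auto simp: St_Suc)
qed (simp add: St_0 explore_inv_init)

subsection \<open>Weights of selected tails\<close>

text \<open>A tail of weight at least w is charged 1 once paired and 2 w(e)/w - 1 before. Pairing a tail
  of weight x \<ge> w costs 2x/w - 2 and creates d \<ge> 2 tails of weight x/d, whose charges add up to
  at most that; so the potential never increases, while it is at least k+1 at the weight of
  the tail selected in step k.\<close>

definition tail_charge :: "real \<Rightarrow> expl \<Rightarrow> halfedge \<Rightarrow> real" where
  "tail_charge w s e = (if e \<in> Tails \<and> fst e \<in> tree s \<and> w \<le> wgt s (fst e) then
      (if e \<in> fst ` set (pairs s) then 1 else 2 * wgt s (fst e) / w - 1) else 0)"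

definition potential :: "real \<Rightarrow> expl \<Rightarrow> real" where
  "potential w s = (\<Sum>e\<in>Tails. tail_charge w s e)"

lemma tail_charge_nonneg: "0 < w \<Longrightarrow> 0 \<le> tail_charge w s e"
  by (auto simp: tail_charge_def field_simps)

lemma potential_collision_le:
  assumes ne: "adm s \<noteq> {}" and coll: "\<omega> (selected s) \<in> open_heads s" and w: "0 < w"
  shows "potential w (advance \<omega> s) \<le> potential w s"
proof -
  define e where "e = selected s"
  have S: "advance \<omega> s = s\<lparr>pairs := pairs s @ [(e, \<omega> e)]\<rparr>"
    using advance_collision[where \<omega>=\<omega>, OF ne coll] by (simp add: e_def)
  have "tail_charge w (advance \<omega> s) e' \<le> tail_charge w s e'" for e'
  proof (cases "e' = e")
    case True
    then show ?thesis
      using selected_tail_props[OF ne] w unfolding S by (auto simp: tail_charge_def e_def field_simps)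
  qed (auto simp: tail_charge_def S)
  then show ?thesis
    unfolding potential_def by (intro sum_mono)
qed

lemma potential_new_vertex_le:
  assumes \<omega>: "\<omega> \<in> Conf" and I: "explore_inv \<omega> s" and ne: "adm s \<noteq> {}"
    and new: "\<omega> (selected s) \<notin> open_heads s" and w: "0 < w"
  shows "potential w (advance \<omega> s) \<le> potential w s"
proof -
  define e where "e = selected s"
  define v where "v = fst (\<omega> e)"
  define x where "x = wgt s (fst e)"
  define s' where "s' = advance \<omega> s"
  define B where "B = {e'\<in>Tails. fst e' = v}"
  define c where "c = (if w \<le> x / real (dout v) then 2 * (x / real (dout v)) / w - 1 else 0)"
  have v: "v \<notin> tree s" "v \<in> {1..n}"
    using new_vertex_fresh[OF \<omega> I ne new] by (auto simp: v_def e_def)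
  have S: "s' = \<lparr>pairs = pairs s @ [(e, \<omega> e)], tree = insert v (tree s),
      hgt = (hgt s)(v := hgt s (fst e) + 1), wgt = (wgt s)(v := x / real (dout v))\<rparr>"
    using advance_new_vertex[where \<omega>=\<omega>, OF ne new] by (simp add: s'_def e_def v_def x_def)
  have e: "e \<in> Tails" "fst e \<in> tree s" "e \<notin> fst ` set (pairs s)" "wmin n < x"
    using selected_tail_props[OF ne] by (auto simp: e_def x_def)
  have B_eq: "B = {v} \<times> {..<dout v}"
    using v(2) by (auto simp: B_def tails_def)
  have B: "finite B" "B \<subseteq> Tails" "e \<notin> B" "card B = dout v"
    using e(2) v by (auto simp: B_eq) (auto simp: B_def tails_def)
  have paired_in_tree: "\<forall>p\<in>set (pairs s). fst (fst p) \<in> tree s"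
    using I by (auto simp: explore_inv_def)
  have old_B: "tail_charge w s e' = 0" if "e' \<in> B" for e'
    using that v(1) by (auto simp: tail_charge_def B_def)
  have new_B: "tail_charge w s' e' = c" if "e' \<in> B" for e'
  proof -
    have "e' \<notin> fst ` set (pairs s')"
      using that paired_in_tree e v(1) unfolding S B_def by force
    then show ?thesis
      using that unfolding S tail_charge_def c_def B_def by auto
  qed
  have rest: "tail_charge w s' e' = tail_charge w s e'" if "e' \<in> Tails - B - {e}" for e'
    using that unfolding S tail_charge_def B_def by auto
  have split: "potential w r = tail_charge w r e + (\<Sum>e'\<in>Tails - B - {e}. tail_charge w r e')
      + (\<Sum>e'\<in>B. tail_charge w r e')" for r
    unfolding potential_def using B e(1)
    by (simp add: sum.subset_diff[of B Tails] sum.remove[of "Tails - B" e])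
  have "tail_charge w s' e + real (dout v) * c \<le> tail_charge w s e"
  proof -
    have "tail_charge w s' e = (if w \<le> x then 1 else 0)"
      using e v(1) unfolding S tail_charge_def x_def by auto
    moreover have "tail_charge w s e = (if w \<le> x then 2 * x / w - 1 else 0)"
      using e unfolding tail_charge_def x_def by auto
    moreover have "0 \<le> x" "2 \<le> real (dout v)"
      using e(4) wmin_nonneg degrees_ge_2 v(2) by auto
    ultimately show ?thesis
      using potential_charge_split[OF w] by (simp add: c_def)
  qed
  moreover have "(\<Sum>e'\<in>Tails - B - {e}. tail_charge w s' e') = (\<Sum>e'\<in>Tails - B - {e}. tail_charge w s e')"
    using rest by (rule sum.cong[OF refl])
  ultimately show ?thesis
    using split[of s] split[of s'] B(4) new_B old_B by (simp add: s'_def[symmetric])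
qed

lemma potential_init_le:
  assumes w: "0 < w"
  shows "potential w (init dout i) \<le> max 0 (2 / w - 2)"
proof -
  define d where "d = dout i"
  define c where "c = (if w \<le> 1 / real d then 2 * (1 / real d) / w - 1 else 0)"
  have d: "2 \<le> d"
    using degrees_ge_2 root_in_V by (auto simp: d_def)
  have sub: "{i} \<times> {..<d} \<subseteq> Tails"
    using root_in_V by (auto simp: tails_def d_def)
  have "potential w (init dout i) = (\<Sum>e\<in>Tails. if e \<in> {i} \<times> {..<d} then c else 0)"
    unfolding potential_def using root_in_V
    by (intro sum.cong) (auto simp: tail_charge_def init_def c_def d_def tails_def)
  also have "\<dots> = real d * c"
    using sub by (simp add: sum.If_cases Int_absorb1)
  also have "\<dots> \<le> max 0 (2 / w - 2)"
  proof (cases "w \<le> 1 / real d")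
    case True
    then have "real d * c = 2 / w - real d"
      using d w by (simp add: c_def field_simps)
    then show ?thesis
      using d by simp
  qed (simp add: c_def)
  finally show ?thesis .
qed

lemma potential_St_le: "\<omega> \<in> Conf \<Longrightarrow> 0 < w \<Longrightarrow> potential w (St \<omega> k) \<le> max 0 (2 / w - 2)"
proof (induction k)
  case 0
  then show ?case
    using potential_init_le by (simp add: St_0)
next
  case (Suc k)
  have "potential w (advance \<omega> (St \<omega> k)) \<le> potential w (St \<omega> k)"
    using potential_collision_le potential_new_vertex_le explore_inv_St Suc.prems advance_idle
    by (cases "adm (St \<omega> k) = {}"; cases "\<omega> (selected (St \<omega> k)) \<in> open_heads (St \<omega> k)") auto
  then show ?case
    using Suc by (simp add: St_Suc)
qed

lemma potential_selected_ge:
  assumes I: "explore_inv \<omega> s" and ne: "adm s \<noteq> {}"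
  shows "real (length (pairs s)) + 1 \<le> potential (wgt s (fst (selected s))) s"
proof -
  define e where "e = selected s"
  define x where "x = wgt s (fst e)"
  define M where "M = fst ` set (pairs s)"
  have e: "e \<in> Tails" "fst e \<in> tree s" "e \<notin> M" "wmin n < x"
    using selected_tail_props[OF ne] by (auto simp: e_def x_def M_def)
  have x: "0 < x"
    using e(4) wmin_nonneg by linarith
  have M: "M \<subseteq> Tails" "\<And>e1. e1 \<in> M \<Longrightarrow> fst e1 \<in> tree s"
    using I by (auto simp: explore_inv_def M_def)
  have "x \<le> wgt s (fst e1)" if "e1 \<in> M" for e1
    using explore_inv_greedy[OF I] that selected_adm_max(1)[OF ne] unfolding M_def x_def e_def by blast
  then have "(\<Sum>e'\<in>M. tail_charge x s e') = (\<Sum>e'\<in>M. 1)"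
    using M by (intro sum.cong) (auto simp: tail_charge_def M_def)
  then have "(\<Sum>e'\<in>M. tail_charge x s e') = real (card M)"
    by simp
  moreover have "card M = length (pairs s)"
    using I distinct_card[of "map fst (pairs s)"] by (simp add: explore_inv_def M_def)
  moreover have "tail_charge x s e = 1"
    using e x by (simp add: tail_charge_def x_def)
  moreover have "(\<Sum>e'\<in>insert e M. tail_charge x s e') \<le> potential x s"
    unfolding potential_def using M e x by (intro sum_mono2) (auto intro: tail_charge_nonneg)
  ultimately show ?thesis
    using e(3) by (simp add: M_def x_def e_def)
qed

lemma St_idle: "adm (St \<omega> k) = {} \<Longrightarrow> St \<omega> (k + j) = St \<omega> k"
  by (induction j) (auto simp: St_Suc advance_idle)

lemma length_pairs_St: "adm (St \<omega> k) \<noteq> {} \<Longrightarrow> length (pairs (St \<omega> k)) = k"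
proof (induction k)
  case (Suc k)
  then have "adm (St \<omega> k) \<noteq> {}"
    using St_idle[of \<omega> k 1] by auto
  then show ?case
    using Suc.IH pairs_advance by (simp add: St_Suc)
qed (simp add: St_0 init_def)

lemma selected_weight_bound:
  assumes \<omega>: "\<omega> \<in> Conf" and ne: "adm (St \<omega> k) \<noteq> {}"
  shows "real (k + 1) * wgt (St \<omega> k) (fst (selected (St \<omega> k))) \<le> 2"
proof -
  define x where "x = wgt (St \<omega> k) (fst (selected (St \<omega> k)))"
  have x: "0 < x"
    using selected_tail_props(4)[OF ne] wmin_nonneg by (simp add: x_def)
  have "real k + 1 \<le> potential x (St \<omega> k)"
    using potential_selected_ge[OF explore_inv_St[OF \<omega>] ne] length_pairs_St[OF ne] by (simp add: x_def)
  also have "\<dots> \<le> max 0 (2 / x - 2)"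
    using potential_St_le[OF \<omega> x] .
  finally have "real k + 1 \<le> 2 / x"
    by linarith
  then show ?thesis
    using x by (simp add: x_def[symmetric] field_simps)
qed

lemma adm_St_empty:
  assumes \<omega>: "\<omega> \<in> Conf" and N: "2 \<le> real (N + 1) * wmin n"
  shows "adm (St \<omega> N) = {}"
proof (rule ccontr)
  assume ne: "adm (St \<omega> N) \<noteq> {}"
  then have "real (N + 1) * wmin n < real (N + 1) * wgt (St \<omega> N) (fst (selected (St \<omega> N)))"
    using selected_tail_props(4) by (intro mult_strict_left_mono) auto
  with selected_weight_bound[OF \<omega> ne] N show False
    by linarith
qed

lemma adm_St_nonempty_less_card:
  assumes \<omega>: "\<omega> \<in> Conf" and ne: "adm (St \<omega> k) \<noteq> {}"
  shows "k < card Tails"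
proof -
  define M where "M = fst ` set (pairs (St \<omega> k))"
  have "card M = k"
    using explore_inv_St[OF \<omega>] length_pairs_St[OF ne] distinct_card[of "map fst (pairs (St \<omega> k))"]
    by (simp add: explore_inv_def M_def)
  moreover have "M \<subseteq> Tails"
    using explore_inv_St[OF \<omega>] unfolding explore_inv_def M_def by blast
  then have "card (insert (selected (St \<omega> k)) M) \<le> card Tails"
    using selected_tail_props(1)[OF ne] by (intro card_mono) auto
  moreover have "selected (St \<omega> k) \<notin> M"
    using selected_tail_props(3)[OF ne] by (simp add: M_def)
  ultimately show ?thesis
    by (simp add: M_def)
qed

lemma kappa_less_iff:
  assumes \<omega>: "\<omega> \<in> Conf"
  shows "j < \<kappa> \<omega> \<longleftrightarrow> adm (St \<omega> j) \<noteq> {}"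
proof
  assume "j < \<kappa> \<omega>"
  then show "adm (St \<omega> j) \<noteq> {}"
    unfolding kappa_def by (rule not_less_Least)
next
  assume ne: "adm (St \<omega> j) \<noteq> {}"
  have "adm (St \<omega> (card Tails)) = {}"
    using adm_St_nonempty_less_card[OF \<omega>] by blast
  then have idle: "adm (St \<omega> (\<kappa> \<omega>)) = {}"
    unfolding kappa_def by (rule LeastI)
  show "j < \<kappa> \<omega>"
  proof (rule ccontr)
    assume "\<not> j < \<kappa> \<omega>"
    then obtain d where "j = \<kappa> \<omega> + d"
      by (metis le_iff_add not_less)
    with St_idle[OF idle] ne idle show False
      by simp
  qed
qed

definition collision :: "(halfedge \<Rightarrow> halfedge) \<Rightarrow> nat \<Rightarrow> bool" where
  "collision \<omega> k \<longleftrightarrow> adm (St \<omega> k) \<noteq> {} \<and> \<omega> (selected (St \<omega> k)) \<in> open_heads (St \<omega> k)"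

lemma W_Suc:
  "\<omega> \<in> Conf \<Longrightarrow>
   W \<omega> (Suc k) = W \<omega> k + (if collision \<omega> k then wgt (St \<omega> k) (fst (selected (St \<omega> k))) else 0)"
  by (simp add: collision_def kappa_less_iff Let_def)

lemma W_add:
  "\<omega> \<in> Conf \<Longrightarrow> W \<omega> (K + d) - W \<omega> K
     = (\<Sum>j\<in>{K..<K + d}. if collision \<omega> j then wgt (St \<omega> j) (fst (selected (St \<omega> j))) else 0)"
  by (induction d) (simp_all add: W_Suc del: Wp.simps(2))

lemma W_kappa_increment_le:
  assumes \<omega>: "\<omega> \<in> Conf" and N: "adm (St \<omega> N) = {}"
  shows "W \<omega> (\<kappa> \<omega>) - W \<omega> K \<le> (\<Sum>j\<in>{j. collision \<omega> j} \<inter> {K..<N}. 2 / real (j + 1))"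
proof -
  define g where "g j = (if collision \<omega> j then wgt (St \<omega> j) (fst (selected (St \<omega> j))) else 0)" for j
  define a where "a j = (if collision \<omega> j then 2 / real (j + 1) else 0)" for j
  have g_le_a: "g j \<le> a j" for j
    using selected_weight_bound[OF \<omega>, of j] by (auto simp: g_def a_def collision_def field_simps)
  have kN: "\<kappa> \<omega> \<le> N"
    using kappa_less_iff[OF \<omega>, of N] N by simp
  have "(\<Sum>j\<in>{K..<N}. a j) = (\<Sum>j\<in>{j\<in>{K..<N}. collision \<omega> j}. 2 / real (j + 1))"
    unfolding a_def by (rule sum.inter_filter[symmetric]) simp
  also have "{j\<in>{K..<N}. collision \<omega> j} = {j. collision \<omega> j} \<inter> {K..<N}"
    by auto
  finally have sum_a: "(\<Sum>j\<in>{K..<N}. a j) = (\<Sum>j\<in>{j. collision \<omega> j} \<inter> {K..<N}. 2 / real (j + 1))" .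
  have a_nonneg: "0 \<le> (\<Sum>j\<in>{K..<N}. a j)"
    by (intro sum_nonneg) (simp add: a_def)
  show ?thesis
  proof (cases "K \<le> \<kappa> \<omega>")
    case True
    then obtain d where d: "\<kappa> \<omega> = K + d"
      using le_iff_add by blast
    have "W \<omega> (\<kappa> \<omega>) - W \<omega> K = (\<Sum>j\<in>{K..<\<kappa> \<omega>}. g j)"
      using W_add[OF \<omega>, of K d] d by (simp add: g_def)
    also have "\<dots> \<le> (\<Sum>j\<in>{K..<\<kappa> \<omega>}. a j)"
      by (intro sum_mono g_le_a)
    also have "\<dots> \<le> (\<Sum>j\<in>{K..<N}. a j)"
      using kN by (intro sum_mono2) (auto simp: a_def)
    finally show ?thesis
      using sum_a by simp
  next
    case False
    then obtain d where d: "K = \<kappa> \<omega> + d"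
      by (metis le_iff_add nat_le_linear)
    have "\<not> collision \<omega> j" if "\<kappa> \<omega> \<le> j" for j
      using that kappa_less_iff[OF \<omega>, of j] by (auto simp: collision_def)
    then have "W \<omega> (\<kappa> \<omega> + d) - W \<omega> (\<kappa> \<omega>) = 0"
      unfolding W_add[OF \<omega>] by (intro sum.neutral) auto
    then show ?thesis
      using d a_nonneg sum_a by simp
  qed
qed

subsection \<open>Collisions given the past\<close>

definition cylinder :: "(halfedge \<Rightarrow> halfedge) \<Rightarrow> nat \<Rightarrow> (halfedge \<Rightarrow> halfedge) set" where
  "cylinder \<omega>0 k = {\<omega>\<in>Conf. \<forall>e\<in>fst ` set (pairs (St \<omega>0 k)). \<omega> e = \<omega>0 e}"

lemma pairs_advance_mono: "set (pairs s) \<subseteq> set (pairs (advance \<omega> s))"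
  by (cases "adm s = {}") (auto simp: advance_idle pairs_advance)

lemma advance_cong: "\<omega> (selected s) = \<omega>' (selected s) \<Longrightarrow> advance \<omega> s = advance \<omega>' s"
  unfolding step_def Let_def by simp

lemma St_eq_if_agree: "(\<And>e. e \<in> fst ` set (pairs (St \<omega>0 k)) \<Longrightarrow> \<omega> e = \<omega>0 e) \<Longrightarrow> St \<omega> k = St \<omega>0 k"
proof (induction k)
  case (Suc k)
  have "set (pairs (St \<omega>0 k)) \<subseteq> set (pairs (St \<omega>0 (Suc k)))"
    using pairs_advance_mono by (simp add: St_Suc)
  then have IH: "St \<omega> k = St \<omega>0 k"
    using Suc by (intro Suc.IH) blast
  show ?case
  proof (cases "adm (St \<omega>0 k) = {}")
    case True
    then show ?thesis
      using IH by (simp add: St_Suc advance_idle)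
  next
    case False
    then have "selected (St \<omega>0 k) \<in> fst ` set (pairs (St \<omega>0 (Suc k)))"
      by (simp add: St_Suc pairs_advance)
    then have "advance \<omega> (St \<omega>0 k) = advance \<omega>0 (St \<omega>0 k)"
      using Suc.prems by (intro advance_cong) blast
    then show ?thesis
      using IH by (simp add: St_Suc)
  qed
qed (simp add: St_0)

lemma St_cylinder: "\<omega> \<in> cylinder \<omega>0 k \<Longrightarrow> St \<omega> k = St \<omega>0 k"
  by (rule St_eq_if_agree) (auto simp: cylinder_def)

lemma cylinder_0: "cylinder \<omega>0 0 = Conf"
  by (auto simp: cylinder_def St_0 init_def)

lemma finite_cylinder [simp]: "finite (cylinder \<omega>0 k)"
  by (rule finite_subset[OF _ finite_Conf]) (auto simp: cylinder_def)

definition fibre :: "(halfedge \<Rightarrow> halfedge) \<Rightarrow> nat \<Rightarrow> halfedge \<Rightarrow> (halfedge \<Rightarrow> halfedge) set" where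
  "fibre \<omega>0 j f = {\<omega>\<in>cylinder \<omega>0 j. \<omega> (selected (St \<omega>0 j)) = f}"

lemma cylinder_Suc_fibre:
  assumes ne: "adm (St \<omega>0 j) \<noteq> {}" and \<omega>1: "\<omega>1 \<in> fibre \<omega>0 j f"
  shows "cylinder \<omega>1 (Suc j) = fibre \<omega>0 j f"
proof -
  have \<omega>1': "\<omega>1 \<in> cylinder \<omega>0 j" "\<omega>1 (selected (St \<omega>0 j)) = f"
    using \<omega>1 by (simp_all add: fibre_def)
  have "pairs (St \<omega>1 (Suc j)) = pairs (St \<omega>0 j) @ [(selected (St \<omega>0 j), f)]"
    unfolding St_Suc St_cylinder[OF \<omega>1'(1)] pairs_advance[OF ne] \<omega>1'(2) ..
  with \<omega>1' show ?thesis
    by (auto simp: cylinder_def fibre_def)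
qed

lemma collision_fibre_iff:
  assumes "adm (St \<omega>0 j) \<noteq> {}" "\<omega> \<in> fibre \<omega>0 j f"
  shows "collision \<omega> j \<longleftrightarrow> f \<in> open_heads (St \<omega>0 j)"
  using assms St_cylinder[of \<omega> \<omega>0 j] by (auto simp: fibre_def collision_def)

lemma cylinder_eq_UN_fibre:
  assumes ne: "adm (St \<omega>0 j) \<noteq> {}"
  shows "cylinder \<omega>0 j = (\<Union>f\<in>unmatched_heads (St \<omega>0 j). fibre \<omega>0 j f)"
proof -
  have "\<omega> (selected (St \<omega>0 j)) \<in> unmatched_heads (St \<omega>0 j)" if "\<omega> \<in> cylinder \<omega>0 j" for \<omega>
  proof -
    have "\<omega> \<in> Conf" "St \<omega> j = St \<omega>0 j"
      using that St_cylinder[OF that] by (simp_all add: cylinder_def)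
    then show ?thesis
      using selected_head_unmatched[OF _ explore_inv_St, of \<omega> j] ne by simp
  qed
  then show ?thesis
    by (auto simp: fibre_def)
qed

text \<open>Exchanging two unmatched heads maps a cylinder onto itself; this is why the head paired
  in the next step is uniform among the unmatched heads.\<close>

definition transpose_heads :: "halfedge \<Rightarrow> halfedge \<Rightarrow> (halfedge \<Rightarrow> halfedge) \<Rightarrow> halfedge \<Rightarrow> halfedge" where
  "transpose_heads f f' \<omega> = restrict (Transposition.transpose f f' \<circ> \<omega>) Tails"

lemma transpose_heads_Conf:
  assumes \<omega>: "\<omega> \<in> Conf" and f: "f \<in> Heads" "f' \<in> Heads"
  shows "transpose_heads f f' \<omega> \<in> Conf"
proof -
  have \<omega>': "\<omega> \<in> Tails \<rightarrow>\<^sub>E Heads" "bij_betw \<omega> Tails Heads"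
    using Conf_D[OF \<omega>] by auto
  have "bij_betw (Transposition.transpose f f') Heads Heads"
    by (rule bij_betw_transpose_iff) (simp add: f)
  then have "bij_betw (Transposition.transpose f f' \<circ> \<omega>) Tails Heads"
    by (rule bij_betw_trans[OF \<omega>'(2)])
  then have "bij_betw (transpose_heads f f' \<omega>) Tails Heads"
    using bij_betw_cong[of Tails "transpose_heads f f' \<omega>" "Transposition.transpose f f' \<circ> \<omega>" Heads]
    by (simp add: transpose_heads_def)
  moreover have "Transposition.transpose f f' (\<omega> x) \<in> Heads" if "x \<in> Tails" for x
  proof -
    have "\<omega> x \<in> Heads"
      using \<omega>'(1) that by auto
    then show ?thesis
      using f by (simp add: Transposition.transpose_def)
  qed
  then have "transpose_heads f f' \<omega> \<in> Tails \<rightarrow>\<^sub>E Heads"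
    by (simp add: transpose_heads_def)
  ultimately show ?thesis
    by (simp add: Omega_def)
qed

lemma transpose_heads_involution:
  assumes "\<omega> \<in> Conf"
  shows "transpose_heads f f' (transpose_heads f f' \<omega>) = \<omega>"
proof (rule ext)
  fix x
  have "\<omega> \<in> extensional Tails"
    using Conf_D[OF assms] by (simp add: PiE_def)
  then have "x \<notin> Tails \<Longrightarrow> \<omega> x = undefined"
    by (rule extensional_arb)
  then show "transpose_heads f f' (transpose_heads f f' \<omega>) x = \<omega> x"
    unfolding transpose_heads_def by (cases "x \<in> Tails") simp_all
qed

lemma transpose_heads_fibre:
  assumes \<omega>0: "\<omega>0 \<in> Conf" and ne: "adm (St \<omega>0 j) \<noteq> {}"
    and f: "f \<in> unmatched_heads (St \<omega>0 j)" "f' \<in> unmatched_heads (St \<omega>0 j)"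
    and \<omega>: "\<omega> \<in> fibre \<omega>0 j f"
  shows "transpose_heads f f' \<omega> \<in> fibre \<omega>0 j f'"
proof -
  have paired: "p \<in> set (pairs (St \<omega>0 j)) \<Longrightarrow> fst p \<in> Tails \<and> snd p = \<omega>0 (fst p)" for p
    using explore_inv_St[OF \<omega>0] by (auto simp: explore_inv_def)
  have "transpose_heads f f' \<omega> e = \<omega>0 e" if e: "e \<in> fst ` set (pairs (St \<omega>0 j))" for e
  proof -
    obtain p where p: "p \<in> set (pairs (St \<omega>0 j))" "e = fst p"
      using e by blast
    then have "\<omega>0 e \<in> snd ` set (pairs (St \<omega>0 j))"
      using paired[OF p(1)] by (metis image_eqI)
    then have "\<omega>0 e \<noteq> f" "\<omega>0 e \<noteq> f'"
      using f by auto
    moreover have "\<omega> e = \<omega>0 e"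
      using \<omega> e by (auto simp: fibre_def cylinder_def)
    moreover have "e \<in> Tails"
      using paired[OF p(1)] p(2) by simp
    ultimately show ?thesis
      by (simp add: transpose_heads_def)
  qed
  moreover have "transpose_heads f f' \<omega> \<in> Conf"
    using \<omega> f by (intro transpose_heads_Conf) (auto simp: fibre_def cylinder_def)
  moreover have "transpose_heads f f' \<omega> (selected (St \<omega>0 j)) = f'"
    using selected_tail_props(1)[OF ne] \<omega> by (simp add: transpose_heads_def fibre_def)
  ultimately show ?thesis
    by (simp add: fibre_def cylinder_def)
qed

lemma card_fibre_eq:
  assumes \<omega>0: "\<omega>0 \<in> Conf" and ne: "adm (St \<omega>0 j) \<noteq> {}"
    and f: "f \<in> unmatched_heads (St \<omega>0 j)" "f' \<in> unmatched_heads (St \<omega>0 j)"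
  shows "card (fibre \<omega>0 j f) = card (fibre \<omega>0 j f')"
proof (rule bij_betw_same_card[of "transpose_heads f f'"], rule bij_betw_byWitness)
  show "transpose_heads f f' ` fibre \<omega>0 j f \<subseteq> fibre \<omega>0 j f'"
    using transpose_heads_fibre[OF \<omega>0 ne f] by blast
  have "transpose_heads f' f = transpose_heads f f'"
    unfolding transpose_heads_def by (subst transpose_commute) (rule refl)
  then show "transpose_heads f f' ` fibre \<omega>0 j f' \<subseteq> fibre \<omega>0 j f"
    using transpose_heads_fibre[OF \<omega>0 ne f(2,1)] by auto
qed (auto simp: fibre_def cylinder_def transpose_heads_involution)

lemma card_cylinder_eq:
  assumes \<omega>0: "\<omega>0 \<in> Conf" and ne: "adm (St \<omega>0 j) \<noteq> {}"
  shows "card (cylinder \<omega>0 j)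
    = card (unmatched_heads (St \<omega>0 j)) * card (fibre \<omega>0 j (\<omega>0 (selected (St \<omega>0 j))))"
proof -
  have f0: "\<omega>0 (selected (St \<omega>0 j)) \<in> unmatched_heads (St \<omega>0 j)"
    using selected_head_unmatched[OF \<omega>0 explore_inv_St[OF \<omega>0] ne] .
  have "card (cylinder \<omega>0 j) = (\<Sum>f\<in>unmatched_heads (St \<omega>0 j). card (fibre \<omega>0 j f))"
    unfolding cylinder_eq_UN_fibre[OF ne] by (rule card_UN_disjoint) (auto simp: fibre_def)
  also have "\<dots> = (\<Sum>f\<in>unmatched_heads (St \<omega>0 j). card (fibre \<omega>0 j (\<omega>0 (selected (St \<omega>0 j)))))"
    using card_fibre_eq[OF \<omega>0 ne _ f0] by (intro sum.cong) auto
  finally show ?thesis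
    by simp
qed

lemma card_open_heads_le:
  assumes \<omega>: "\<omega> \<in> Conf" and ne: "adm (St \<omega> j) \<noteq> {}"
  shows "card (open_heads (St \<omega> j)) \<le> D * (j + 1)"
proof -
  have T: "tree (St \<omega> j) \<subseteq> {1..n}" "card (tree (St \<omega> j)) \<le> j + 1"
    using explore_inv_St[OF \<omega>, of j] length_pairs_St[OF ne] by (auto simp: explore_inv_def)
  then have fin: "finite (tree (St \<omega> j))"
    by (auto intro: finite_subset)
  have "open_heads (St \<omega> j) \<subseteq> Sigma (tree (St \<omega> j)) (\<lambda>v. {..<din v})"
    by (auto simp: bdry_in_def heads_def)
  then have "card (open_heads (St \<omega> j)) \<le> (\<Sum>v\<in>tree (St \<omega> j). din v)"
    using fin card_mono[of "Sigma (tree (St \<omega> j)) (\<lambda>v. {..<din v})"] by simp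
  also have "\<dots> \<le> (\<Sum>v\<in>tree (St \<omega> j). D)"
    using T(1) degrees_le by (intro sum_mono) auto
  also have "\<dots> = D * card (tree (St \<omega> j))"
    by (simp add: mult.commute)
  also have "\<dots> \<le> D * (j + 1)"
    using T(2) by (rule mult_le_mono2)
  finally show ?thesis .
qed

lemma card_unmatched_heads_ge:
  assumes ne: "adm (St \<omega> j) \<noteq> {}" and j: "j \<le> n"
  shows "n \<le> card (unmatched_heads (St \<omega> j))"
proof -
  have "card (snd ` set (pairs (St \<omega> j))) \<le> j"
    using card_image_le[of "set (pairs (St \<omega> j))" snd] card_length[of "pairs (St \<omega> j)"]
      length_pairs_St[OF ne] by simp
  then show ?thesis
    using diff_card_le_card_Diff[of "snd ` set (pairs (St \<omega> j))" Heads] card_Heads_ge j by simp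
qed

lemma collision_fraction:
  assumes \<omega>: "\<omega> \<in> Conf" and ne: "adm (St \<omega> j) \<noteq> {}" and j: "j \<le> n"
  shows "real (card (open_heads (St \<omega> j)))
    \<le> real (card (unmatched_heads (St \<omega> j))) * (real D * real (j + 1) / real n)"
proof -
  have "real (card (open_heads (St \<omega> j))) \<le> real D * real (j + 1)"
    using card_open_heads_le[OF \<omega> ne] unfolding of_nat_mult[symmetric] of_nat_le_iff .
  also have "\<dots> = real n * (real D * real (j + 1) / real n)"
    using root_in_V by simp
  also have "\<dots> \<le> real (card (unmatched_heads (St \<omega> j))) * (real D * real (j + 1) / real n)"
    using card_unmatched_heads_ge[OF ne j] by (intro mult_right_mono) auto
  finally show ?thesis .
qed

text \<open>Given the first j steps, a collision in step j has probability at most D(j+1)/n.\<close>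

lemma cylinder_moment_step:
  fixes R :: "(halfedge \<Rightarrow> halfedge) \<Rightarrow> real"
  assumes \<omega>0: "\<omega>0 \<in> Conf" and j: "j \<le> n" and x: "0 \<le> x" and P: "0 \<le> P"
    and IH: "\<And>\<omega>1. \<omega>1 \<in> Conf \<Longrightarrow>
      (\<Sum>\<omega>\<in>cylinder \<omega>1 (Suc j). R \<omega>) \<le> real (card (cylinder \<omega>1 (Suc j))) * P"
  shows "(\<Sum>\<omega>\<in>cylinder \<omega>0 j. (1 + (if collision \<omega> j then x else 0)) * R \<omega>)
         \<le> real (card (cylinder \<omega>0 j)) * ((1 + x * (real D * real (j + 1) / real n)) * P)"
proof (cases "adm (St \<omega>0 j) = {}")
  case True
  then have "cylinder \<omega>0 (Suc j) = cylinder \<omega>0 j"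
    by (simp add: cylinder_def St_Suc advance_idle)
  moreover have "\<not> collision \<omega> j" if "\<omega> \<in> cylinder \<omega>0 j" for \<omega>
    using St_cylinder[OF that] True by (simp add: collision_def)
  ultimately have "(\<Sum>\<omega>\<in>cylinder \<omega>0 j. (1 + (if collision \<omega> j then x else 0)) * R \<omega>)
      \<le> real (card (cylinder \<omega>0 j)) * P"
    using IH[OF \<omega>0] by simp
  also have "\<dots> \<le> real (card (cylinder \<omega>0 j)) * ((1 + x * (real D * real (j + 1) / real n)) * P)"
  proof -
    have "0 \<le> x * (real D * real (j + 1) / real n) * P"
      using x P by simp
    then show ?thesis
      by (intro mult_left_mono) (simp_all add: algebra_simps)
  qed
  finally show ?thesis .
next
  case ne: False
  define H where "H = unmatched_heads (St \<omega>0 j)"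
  define c where "c = card (fibre \<omega>0 j (\<omega>0 (selected (St \<omega>0 j))))"
  have finH: "finite H"
    by (simp add: H_def)
  have f0: "\<omega>0 (selected (St \<omega>0 j)) \<in> H"
    using selected_head_unmatched[OF \<omega>0 explore_inv_St[OF \<omega>0] ne] by (simp add: H_def)
  have sum_fibre: "(\<Sum>\<omega>\<in>fibre \<omega>0 j f. R \<omega>) \<le> real c * P" if "f \<in> H" for f
  proof (cases "fibre \<omega>0 j f = {}")
    case False
    then obtain \<omega>1 where \<omega>1: "\<omega>1 \<in> fibre \<omega>0 j f"
      by blast
    then have "\<omega>1 \<in> Conf"
      by (simp add: fibre_def cylinder_def)
    moreover have "card (fibre \<omega>0 j f) = c"
      unfolding c_def using that f0 unfolding H_def by (rule card_fibre_eq[OF \<omega>0 ne])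
    ultimately show ?thesis
      using IH cylinder_Suc_fibre[OF ne \<omega>1] by metis
  qed (simp add: c_def P)
  have "(\<Sum>\<omega>\<in>cylinder \<omega>0 j. (1 + (if collision \<omega> j then x else 0)) * R \<omega>)
      = (\<Sum>f\<in>H. \<Sum>\<omega>\<in>fibre \<omega>0 j f. (1 + (if collision \<omega> j then x else 0)) * R \<omega>)"
    unfolding cylinder_eq_UN_fibre[OF ne] H_def by (rule sum.UNION_disjoint) (auto simp: fibre_def)
  also have "\<dots> = (\<Sum>f\<in>H. (1 + (if f \<in> open_heads (St \<omega>0 j) then x else 0)) * (\<Sum>\<omega>\<in>fibre \<omega>0 j f. R \<omega>))"
    using collision_fibre_iff[OF ne] by (simp add: sum_distrib_left)
  also have "\<dots> \<le> real (card H) * ((1 + x * (real D * real (j + 1) / real n)) * (real c * P))"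
  proof (rule sum_indicator_weighted_le[OF finH _ sum_fibre _ x])
    show "open_heads (St \<omega>0 j) \<subseteq> H"
      by (auto simp: H_def bdry_in_def)
    show "real (card (open_heads (St \<omega>0 j))) \<le> real (card H) * (real D * real (j + 1) / real n)"
      using collision_fraction[OF \<omega>0 ne j] by (simp add: H_def)
  qed (use P in simp_all)
  also have "\<dots> = real (card (cylinder \<omega>0 j)) * ((1 + x * (real D * real (j + 1) / real n)) * P)"
    using card_cylinder_eq[OF \<omega>0 ne] by (simp add: H_def c_def mult_ac)
  finally show ?thesis .
qed

lemma cylinder_moment_bound:
  fixes x :: "nat \<Rightarrow> real"
  assumes N: "N \<le> n" and x: "\<And>k. 0 \<le> x k" and j: "j \<le> N" and \<omega>0: "\<omega>0 \<in> Conf"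
  shows "(\<Sum>\<omega>\<in>cylinder \<omega>0 j. \<Prod>k\<in>{j..<N}. 1 + (if collision \<omega> k then x k else 0))
     \<le> real (card (cylinder \<omega>0 j)) * (\<Prod>k\<in>{j..<N}. 1 + x k * (real D * real (k + 1) / real n))"
  using j \<omega>0
proof (induction j arbitrary: \<omega>0 rule: inc_induct)
  case (step j)
  define P where "P = (\<Prod>k\<in>{Suc j..<N}. 1 + x k * (real D * real (k + 1) / real n))"
  have "(\<Sum>\<omega>\<in>cylinder \<omega>0 j. \<Prod>k\<in>{j..<N}. 1 + (if collision \<omega> k then x k else 0))
      = (\<Sum>\<omega>\<in>cylinder \<omega>0 j. (1 + (if collision \<omega> j then x j else 0)) *
           (\<Prod>k\<in>{Suc j..<N}. 1 + (if collision \<omega> k then x k else 0)))"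
    using step.hyps(2) by (simp add: prod.atLeast_Suc_lessThan)
  also have "\<dots> \<le> real (card (cylinder \<omega>0 j)) * ((1 + x j * (real D * real (j + 1) / real n)) * P)"
    using step.hyps N x step.IH unfolding P_def
    by (intro cylinder_moment_step step.prems prod_nonneg) (auto intro: add_nonneg_nonneg)
  also have "(1 + x j * (real D * real (j + 1) / real n)) * P
      = (\<Prod>k\<in>{j..<N}. 1 + x k * (real D * real (k + 1) / real n))"
    unfolding P_def using step.hyps(2) by (simp add: prod.atLeast_Suc_lessThan)
  finally show ?case .
qed simp

lemma moment_bound:
  fixes x :: "nat \<Rightarrow> real"
  assumes "N \<le> n" "\<And>k. 0 \<le> x k"
  shows "(\<Sum>\<omega>\<in>Conf. \<Prod>k<N. 1 + (if collision \<omega> k then x k else 0))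
     \<le> real (card Conf) * (\<Prod>k<N. 1 + x k * (real D * real (k + 1) / real n))"
proof -
  obtain \<omega>0 where "\<omega>0 \<in> Conf"
    using Conf_nonempty by auto
  from cylinder_moment_bound[OF assms _ this, of 0] show ?thesis
    by (simp add: cylinder_0 atLeast0LessThan)
qed

subsection \<open>The tail bound\<close>

text \<open>Markov's inequality for the exponential moment of the collisions.\<close>

lemma prob_W_increment_le:
  assumes N: "N \<le> n" "2 \<le> real (N + 1) * wmin n"
    and X: "0 \<le> X" and \<mu>: "0 \<le> \<mu>" and late: "\<And>k. L \<le> k \<Longrightarrow> \<mu> * (2 / real (k + 1)) \<le> 1"
    and T: "0 < T" "T \<le> X\<^sup>2" "T \<le> exp (\<mu> * (\<epsilon> - 2 / real (K + 1)) / 2)"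
  shows "measure_pmf.prob (pmf_of_set Conf) {\<omega>. W \<omega> (\<kappa> \<omega>) \<ge> W \<omega> K + \<epsilon>}
     \<le> exp (X * real D * (real L)\<^sup>2 / real n + 2 * \<mu> * real D * real N / real n) / T"
proof -
  define x where "x = moment_weight K L X \<mu>"
  define Z where "Z \<omega> = (\<Prod>k<N. 1 + (if collision \<omega> k then x k else 0))" for \<omega>
  define Ev where "Ev = Conf \<inter> {\<omega>. W \<omega> (\<kappa> \<omega>) \<ge> W \<omega> K + \<epsilon>}"
  define B where "B = X * real D * (real L)\<^sup>2 / real n + 2 * \<mu> * real D * real N / real n"
  have x: "0 \<le> x k" for k
    using X \<mu> by (simp add: x_def moment_weight_nonneg)
  have Z: "0 \<le> Z \<omega>" for \<omega>
    unfolding Z_def using x by (intro prod_nonneg) (auto intro: add_nonneg_nonneg)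
  have T_le_Z: "T \<le> Z \<omega>" if "\<omega> \<in> Ev" for \<omega>
  proof -
    have "\<omega> \<in> Conf" "W \<omega> K + \<epsilon> \<le> W \<omega> (\<kappa> \<omega>)"
      using that by (auto simp: Ev_def)
    then have "\<epsilon> \<le> (\<Sum>j\<in>{j. collision \<omega> j} \<inter> {K..<N}. 2 / real (j + 1))"
      using W_kappa_increment_le[OF _ adm_St_empty[OF _ N(2)], of \<omega> K] by simp
    from prod_moment_weight_ge[where L=L, OF this X \<mu> late T(2,3)] show ?thesis
      unfolding Z_def x_def by simp
  qed
  have "real (card Ev) * T = (\<Sum>\<omega>\<in>Ev. T)"
    by simp
  also have "\<dots> \<le> (\<Sum>\<omega>\<in>Ev. Z \<omega>)"
    using T_le_Z by (intro sum_mono)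
  also have "\<dots> \<le> (\<Sum>\<omega>\<in>Conf. Z \<omega>)"
    using Z by (intro sum_mono2) (auto simp: Ev_def)
  also have "\<dots> \<le> real (card Conf) * (\<Prod>k<N. 1 + x k * (real D * real (k + 1) / real n))"
    unfolding Z_def using N(1) x by (rule moment_bound)
  also have "\<dots> \<le> real (card Conf) * exp (\<Sum>k<N. x k * (real D * real (k + 1) / real n))"
    using x by (intro mult_left_mono prod_le_exp_sum) auto
  also have "\<dots> \<le> real (card Conf) * exp B"
    using sum_moment_weight_le[OF X \<mu>, where D="real D" and m="real n" and N=N and K=K and L=L] root_in_V
    by (intro mult_left_mono) (auto simp: x_def B_def)
  finally have "real (card Ev) * T \<le> real (card Conf) * exp B" .
  moreover have "0 < real (card Conf)"
    using Conf_nonempty by (simp add: card_gt_0_iff)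
  ultimately have "real (card Ev) / real (card Conf) \<le> exp B / T"
    using T(1) by (simp add: field_simps)
  moreover have "measure_pmf.prob (pmf_of_set Conf) {\<omega>. W \<omega> (\<kappa> \<omega>) \<ge> W \<omega> K + \<epsilon>}
      = real (card Ev) / real (card Conf)"
    using measure_pmf_of_set[OF Conf_nonempty finite_Conf] by (simp add: Ev_def)
  ultimately show ?thesis
    by (simp add: B_def)
qed

lemma prob_W_increment_le_powr:
  fixes \<epsilon> :: real and K :: nat
  defines "\<eta> \<equiv> \<epsilon> - 2 / real (K + 1)"
  assumes \<eta>: "0 < \<eta>" and n: "2 \<le> n"
    and large: "2 * real n / ln (real n) + 1 \<le> real n"
      "real n powr (3/4) * real D * (6 * ln (real n) / \<eta> + 1)\<^sup>2 / real n \<le> 1"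
      "6 * real D * ln (real n) / (\<eta> * real n) \<le> 1"
  shows "measure_pmf.prob (pmf_of_set Conf) {\<omega>. W \<omega> (\<kappa> \<omega>) \<ge> W \<omega> K + \<epsilon>}
     \<le> exp (12 * real D / \<eta> + 2) / real n powr (3/2)"
proof -
  have npos: "0 < real n" and lnpos: "0 < ln (real n)"
    using n by auto
  define N where "N = nat \<lfloor>2 * real n / ln (real n)\<rfloor> + 1"
  define L where "L = nat \<lceil>6 * ln (real n) / \<eta>\<rceil>"
  define X where "X = real n powr (3/4)"
  define \<mu> where "\<mu> = 3 * ln (real n) / \<eta>"
  have "0 \<le> 2 * real n / ln (real n)"
    using npos lnpos by simp
  then have N: "real N \<le> 2 * real n / ln (real n) + 1" "2 * real n / ln (real n) \<le> real N + 1"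
    unfolding N_def by (simp_all add: of_nat_nat) linarith
  have "0 \<le> 6 * ln (real n) / \<eta>"
    using lnpos \<eta> by simp
  then have L: "6 * ln (real n) / \<eta> \<le> real L" "real L \<le> 6 * ln (real n) / \<eta> + 1"
    unfolding L_def by (simp_all add: of_nat_nat)
  have X: "0 \<le> X"
    by (simp add: X_def)
  have \<mu>: "0 \<le> \<mu>"
    using lnpos \<eta> by (simp add: \<mu>_def)
  have late: "\<mu> * (2 / real (k + 1)) \<le> 1" if "L \<le> k" for k
  proof -
    have "6 * ln (real n) / \<eta> \<le> real (k + 1)"
      using L(1) that by simp
    then have "6 * ln (real n) \<le> \<eta> * real (k + 1)"
      using \<eta> by (simp add: divide_le_eq mult.commute)
    moreover have "\<mu> * (2 / real (k + 1)) = 6 * ln (real n) / (\<eta> * real (k + 1))"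
      by (simp add: \<mu>_def)
    ultimately show ?thesis
      using \<eta> by simp
  qed
  have "N \<le> n"
    using N(1) large(1) by linarith
  moreover have "2 \<le> real (N + 1) * wmin n"
  proof -
    have "2 * real n \<le> (real N + 1) * ln (real n)"
      using N(2) lnpos by (simp add: divide_le_eq)
    then show ?thesis
      using npos by (simp add: wmin_def field_simps)
  qed
  moreover have "X\<^sup>2 = real n powr (3/2)"
    unfolding X_def power2_eq_square by (simp add: powr_add[symmetric])
  moreover have "exp (\<mu> * (\<epsilon> - 2 / real (K + 1)) / 2) = real n powr (3/2)"
    using npos \<eta> unfolding \<eta>_def[symmetric] by (simp add: \<mu>_def powr_def)
  ultimately have "measure_pmf.prob (pmf_of_set Conf) {\<omega>. W \<omega> (\<kappa> \<omega>) \<ge> W \<omega> K + \<epsilon>}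
      \<le> exp (X * real D * (real L)\<^sup>2 / real n + 2 * \<mu> * real D * real N / real n) / real n powr (3/2)"
    using npos by (intro prob_W_increment_le[OF _ _ X \<mu> late]) auto
  also have "\<dots> \<le> exp (12 * real D / \<eta> + 2) / real n powr (3/2)"
    using moment_exponent_le[OF npos lnpos \<eta> _ L(2) N(1) large(2,3)]
    by (intro divide_right_mono) (simp_all add: X_def \<mu>_def)
  finally show ?thesis .
qed

end

text \<open>The bound holds for every threshold t and every tie-breaking order.\<close>

theorem proposition5:
  fixes din dout :: "nat \<Rightarrow> nat \<Rightarrow> nat"
    and t :: "nat \<Rightarrow> nat"
    and rk :: "nat \<Rightarrow> halfedge \<Rightarrow> nat"
    and D :: nat
    and \<epsilon> :: real
  assumes "\<forall>n. (\<Sum>i\<in>{1..n}. din n i) = (\<Sum>i\<in>{1..n}. dout n i)"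
    and "\<forall>n. \<forall>i\<in>{1..n}. 2 \<le> din n i \<and> 2 \<le> dout n i"
    and "\<forall>n. \<forall>i\<in>{1..n}. din n i \<le> D \<and> dout n i \<le> D"
    and "\<forall>n. 0 < t n"
    and "\<forall>n. inj (rk n)"
    and "0 < \<epsilon>"
  shows "\<forall>\<delta>>0. \<forall>\<^sub>F n in sequentially. \<forall>i\<in>{1..n}.
           measure_pmf.prob (pmf_of_set (Omega (din n) (dout n) n))
             {\<omega>. Wp (din n) (dout n) n (t n) (rk n) i \<omega> (kappa (din n) (dout n) n (t n) (rk n) i \<omega>)
                  \<ge> Wp (din n) (dout n) n (t n) (rk n) i \<omega> (nat \<lfloor>2 / \<epsilon>\<rfloor>) + \<epsilon>}
           \<le> \<delta> / real n"
proof (intro allI impI)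
  fix \<delta> :: real
  assume \<delta>: "0 < \<delta>"
  define K where "K = nat \<lfloor>2 / \<epsilon>\<rfloor>"
  define \<eta> where "\<eta> = \<epsilon> - 2 / real (K + 1)"
  define C where "C = exp (12 * real D / \<eta> + 2)"
  have "2 / \<epsilon> < real (K + 1)"
    unfolding K_def by linarith
  then have \<eta>: "0 < \<eta>"
    using \<open>0 < \<epsilon>\<close> by (simp add: \<eta>_def field_simps)
  have "\<forall>\<^sub>F n in sequentially. 2 * real n / ln (real n) + 1 \<le> real n"
    "\<forall>\<^sub>F n in sequentially. real n powr (3/4) * real D * (6 * ln (real n) / \<eta> + 1)\<^sup>2 / real n \<le> 1"
    "\<forall>\<^sub>F n in sequentially. 6 * real D * ln (real n) / (\<eta> * real n) \<le> 1"
    "\<forall>\<^sub>F n in sequentially. C / \<delta> \<le> sqrt (real n)"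
    using \<eta> by real_asymp+
  with eventually_ge_at_top[of 2] show "\<forall>\<^sub>F n in sequentially. \<forall>i\<in>{1..n}.
           measure_pmf.prob (pmf_of_set (Omega (din n) (dout n) n))
             {\<omega>. Wp (din n) (dout n) n (t n) (rk n) i \<omega> (kappa (din n) (dout n) n (t n) (rk n) i \<omega>)
                  \<ge> Wp (din n) (dout n) n (t n) (rk n) i \<omega> (nat \<lfloor>2 / \<epsilon>\<rfloor>) + \<epsilon>}
           \<le> \<delta> / real n"
  proof eventually_elim
    case (elim n)
    show ?case
    proof
      fix i
      assume "i \<in> {1..n}"
      with assms(1-3) interpret config_exploration "din n" "dout n" n "t n" "rk n" i D
        by unfold_locales auto
      have "measure_pmf.prob (pmf_of_set (Omega (din n) (dout n) n))
          {\<omega>. W \<omega> (\<kappa> \<omega>) \<ge> W \<omega> K + \<epsilon>} \<le> C / real n powr (3/2)"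
        using prob_W_increment_le_powr[of \<epsilon> K] \<eta> elim by (simp add: C_def \<eta>_def)
      also have "\<dots> \<le> \<delta> / real n"
        using elim \<delta> by (intro divide_powr_three_halves_le) auto
      finally show "measure_pmf.prob (pmf_of_set (Omega (din n) (dout n) n))
          {\<omega>. W \<omega> (\<kappa> \<omega>) \<ge> W \<omega> (nat \<lfloor>2 / \<epsilon>\<rfloor>) + \<epsilon>} \<le> \<delta> / real n"
        by (simp add: K_def)
    qed
  qed
qed

end
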